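(* Consider the state space model and the extended alive particle filter (APF) described in the context, with $N\ge1$. For every $t\in\{1,\dots,T\}$ and every $t'$ with $t\le t'\le T$, $$\mathbb{E}\left[\frac{\sum_{n=1}^N w_t^{(n)}\, p\!\left(y_{t+1:t'} \,\middle|\, x_t^{(n)}\right)}{P_t - 1}\,\middle|\, \mathcal{F}_{t-1}\right] = \sum_{n=1}^N \frac{w_{t-1}^{(n)}}{\sum_{m=1}^N w_{t-1}^{(m)}}\, p\!\left(y_{t:t'} \,\middle|\, x_{t-1}^{(n)}\right).$$
   Context: State space model: $x_0\sim p(x_0)$; for $t=1,\dots,T$, $x_t \sim f_t(x_t\mid x_{t-1})$ and $y_t\sim g_t(y_t\mid x_t)$; the observations $y_1,\dots,y_T$ are fixed. For $s\ge t$, $p(y_{t:s}\mid x_{t-1})$ denotes the conditional density of $y_t,\dots,y_s$ given $x_{t-1}$ under this model, and $p(y_{t+1:t}\mid x_t):=1$. Extended alive particle filter with $N$ particles: initially draw $x_0^{(1)},\dots,x_0^{(N)}$ independently from $p(x_0)$ and set $w_0^{(n)}=1$. For each $t=1,\dots,T$: set $P_t\gets 0$; for each $n=1,\dots,N+1$, repeat the following until the weight is positive: draw an index $a$ from the categorical distribution with probabilities $w_{t-1}^{(m)}/\sum_{l=1}^N w_{t-1}^{(l)}$, $m=1,\dots,N$; draw $x_t^{(n)}\sim f_t(\cdot\mid x_{t-1}^{(a)})$; increment $P_t$ by one; set $w_t^{(n)} = g_t(y_t\mid x_t^{(n)})$. Thus $P_t$ is the total number of propagations (including those for the $(N+1)$-th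 particle) at time $t$. $\mathcal{F}_t=\{x_t^{(n)},w_t^{(n)}\}_{n=1}^N$ denotes the states and weights of the first $N$ particles at time $t$. *)

theory Defs
  imports "HOL-Probability.Probability"
begin

text \<open>State space model: state space M, transition kernels f t (x_{t-1} to law of x_t),
  likelihoods g t x = g_t(y_t | x) with the observations y fixed.\<close>

text \<open>lik_aux f g t k x = p(y_{t:t+k-1} | x_{t-1} = x).\<close>
primrec lik_aux :: "(nat \<Rightarrow> 'a \<Rightarrow> 'a measure) \<Rightarrow> (nat \<Rightarrow> 'a \<Rightarrow> real) \<Rightarrow> nat \<Rightarrow> nat \<Rightarrow> 'a \<Rightarrow> ennreal" where
  "lik_aux f g t 0 x = 1"
| "lik_aux f g t (Suc k) x = (\<integral>\<^sup>+ x'. ennreal (g t x') * lik_aux f g (Suc t) k x' \<partial>(f t x))"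

text \<open>cond_lik f g t s x = p(y_{t:s} | x_{t-1} = x); equals 1 when s = t - 1.\<close>
definition cond_lik :: "(nat \<Rightarrow> 'a \<Rightarrow> 'a measure) \<Rightarrow> (nat \<Rightarrow> 'a \<Rightarrow> real) \<Rightarrow> nat \<Rightarrow> nat \<Rightarrow> 'a \<Rightarrow> ennreal" where
  "cond_lik f g t s x = lik_aux f g t (Suc s - t) x"

definition apf_trial :: "nat \<Rightarrow> (nat \<Rightarrow> real) \<Rightarrow> (nat \<Rightarrow> 'a) \<Rightarrow> ('a \<Rightarrow> 'a measure) \<Rightarrow> 'a measure" where
  "apf_trial N w xs ft =
     bind (density (count_space {1..N}) (\<lambda>a. ennreal (w a / (\<Sum>m\<in>{1..N}. w m)))) (\<lambda>a. ft (xs a))"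

text \<open>The propagations at time t form an i.i.d. stream of trials; the k-th (0-based)
  particle is the k-th trial with positive weight.\<close>
definition apf_succ :: "('a \<Rightarrow> real) \<Rightarrow> 'a stream \<Rightarrow> nat set" where
  "apf_succ G \<omega> = {i. 0 < G (\<omega> !! i)}"

primrec apf_time :: "('a \<Rightarrow> real) \<Rightarrow> 'a stream \<Rightarrow> nat \<Rightarrow> nat" where
  "apf_time G \<omega> 0 = (LEAST i. 0 < G (\<omega> !! i))"
| "apf_time G \<omega> (Suc k) = (LEAST i. apf_time G \<omega> k < i \<and> 0 < G (\<omega> !! i))"

definition apf_done :: "('a \<Rightarrow> real) \<Rightarrow> nat \<Rightarrow> 'a stream \<Rightarrow> bool" where
  "apf_done G N \<omega> \<longleftrightarrow> infinite (apf_succ G \<omega>) \<or> N < card (apf_succ G \<omega>)"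

definition apf_particle :: "('a \<Rightarrow> real) \<Rightarrow> 'a stream \<Rightarrow> nat \<Rightarrow> 'a" where
  "apf_particle G \<omega> n = \<omega> !! apf_time G \<omega> (n - 1)"

definition apf_P :: "('a \<Rightarrow> real) \<Rightarrow> nat \<Rightarrow> 'a stream \<Rightarrow> nat" where
  "apf_P G N \<omega> = Suc (apf_time G \<omega> N)"

end

theory Submission
  imports Defs
begin

text \<open>
  Given F_(t-1), the propagations at time t are i.i.d. draws from the mixture
  Q = sum_n (w_n / W) f_t(x_(t-1)^(n)), and the numerator of the estimator is the sum of
  h(x) = g_t(y_t | x) p(y_(t+1:t') | x) over the first P_t - 1 draws, because h vanishes
  on dead (zero-weight) draws. For i < m, exchangeability gives
  E[h(draw i); draw m is the (N+1)-th live draw] = E_Q h * Pr[draw m - 1 is the N-th live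
  draw]. Summing over the m draws cancels the division by P_t - 1 = m, and
  summing over m leaves E_Q h times the probability that an N-th live draw ever occurs.
  That probability is 1 unless live draws have probability 0, in which case E_Q h = 0.
  Finally, E_Q h is the right-hand side by the one-step recursion of p(y_(t:t') | x).
\<close>

section \<open>Counting live draws\<close>

definition succ_count :: "('a \<Rightarrow> real) \<Rightarrow> nat \<Rightarrow> 'a stream \<Rightarrow> nat" where
  "succ_count G m \<omega> = card {i. i < m \<and> 0 < G (\<omega> !! i)}"

lemma succ_count_0 [simp]: "succ_count G 0 \<omega> = 0"
  by (simp add: succ_count_def)

lemma succ_count_Suc:
  "succ_count G (Suc m) \<omega> = succ_count G m \<omega> + (if 0 < G (\<omega> !! m) then 1 else 0)"
proof -
  have "{i. i < Suc m \<and> 0 < G (\<omega> !! i)} =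
      (if 0 < G (\<omega> !! m) then insert m else id) {i. i < m \<and> 0 < G (\<omega> !! i)}"
    by (auto simp: less_Suc_eq)
  then show ?thesis
    by (simp add: succ_count_def)
qed

lemma succ_count_Suc_Cons:
  "succ_count G (Suc m) (x ## \<omega>) = (if 0 < G x then 1 else 0) + succ_count G m \<omega>"
  by (induction m) (simp_all add: succ_count_Suc)

lemma succ_count_mono: "m \<le> m' \<Longrightarrow> succ_count G m \<omega> \<le> succ_count G m' \<omega>"
  unfolding succ_count_def by (rule card_mono) auto

lemma succ_count_strict_mono:
  "i < m \<Longrightarrow> 0 < G (\<omega> !! i) \<Longrightarrow> succ_count G i \<omega> < succ_count G m \<omega>"
  using succ_count_mono[of "Suc i" m G \<omega>] by (simp add: succ_count_Suc)

lemma apf_time_eqI: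
  "0 < G (\<omega> !! m) \<Longrightarrow> succ_count G m \<omega> = k \<Longrightarrow> apf_time G \<omega> k = m"
proof (induction k arbitrary: m)
  case 0
  then have "\<not> 0 < G (\<omega> !! i)" if "i < m" for i
    using succ_count_strict_mono[OF that] by fastforce
  with "0.prems" show ?case
    by (auto intro!: Least_equality simp: not_less[symmetric])
next
  case (Suc k)
  define S where "S = {i. i < m \<and> 0 < G (\<omega> !! i)}"
  have "finite S"
    by (simp add: S_def)
  moreover have "S \<noteq> {}"
    using Suc.prems(2) unfolding succ_count_def S_def by (metis card.empty nat.distinct(1))
  ultimately have "Max S \<in> S"
    by simp
  define j where "j = Max S"
  have j: "j < m" "0 < G (\<omega> !! j)"
    using \<open>Max S \<in> S\<close> by (auto simp: S_def j_def)
  have no_succ_between: "\<not> 0 < G (\<omega> !! i)" if "j < i" "i < m" for i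
  proof
    assume "0 < G (\<omega> !! i)"
    with that have "i \<in> S"
      by (simp add: S_def)
    with that show False
      using Max_ge[OF \<open>finite S\<close>, of i] by (simp add: j_def)
  qed
  have "S = insert j {i. i < j \<and> 0 < G (\<omega> !! i)}"
    using j no_succ_between by (auto simp: S_def) (meson linorder_neqE_nat)
  then have "succ_count G j \<omega> = k"
    using Suc.prems(2) by (simp add: succ_count_def S_def[symmetric])
  then have "apf_time G \<omega> k = j"
    using Suc.IH j(2) by simp
  with Suc.prems(1) j no_succ_between show ?case
    by (auto intro!: Least_equality simp: not_less[symmetric])
qed

lemma succ_count_reaches:
  "k < succ_count G m \<omega> \<Longrightarrow> \<exists>i<m. 0 < G (\<omega> !! i) \<and> succ_count G i \<omega> = k"
proof (induction m)
  case (Suc m)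
  then show ?case
    by (cases "k < succ_count G m \<omega>")
      (auto simp: succ_count_Suc less_Suc_eq split: if_splits)
qed simp

lemma apf_done_iff: "apf_done G N \<omega> \<longleftrightarrow> (\<exists>m. 0 < G (\<omega> !! m) \<and> succ_count G m \<omega> = N)"
proof
  assume "apf_done G N \<omega>"
  then obtain B where B: "finite B" "B \<subseteq> apf_succ G \<omega>" "card B = Suc N"
    unfolding apf_done_def
    by (metis infinite_arbitrarily_large Suc_leI obtain_subset_with_card_n)
  then have "card B \<le> succ_count G (Suc (Max B)) \<omega>"
    unfolding succ_count_def
    by (intro card_mono) (auto simp: apf_succ_def le_imp_less_Suc)
  with B(3) show "\<exists>m. 0 < G (\<omega> !! m) \<and> succ_count G m \<omega> = N"
    using succ_count_reaches by (metis Suc_le_lessD)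
next
  assume "\<exists>m. 0 < G (\<omega> !! m) \<and> succ_count G m \<omega> = N"
  then obtain m where "0 < G (\<omega> !! m)" "succ_count G m \<omega> = N"
    by blast
  then have "card {i. i < Suc m \<and> 0 < G (\<omega> !! i)} = Suc N"
    using succ_count_Suc[of G m \<omega>] by (simp add: succ_count_def)
  moreover have "{i. i < Suc m \<and> 0 < G (\<omega> !! i)} \<subseteq> apf_succ G \<omega>"
    by (auto simp: apf_succ_def)
  ultimately show "apf_done G N \<omega>"
    unfolding apf_done_def by (metis card_mono lessI order_less_le_trans)
qed

lemma sum_apf_particle:
  fixes h :: "'a \<Rightarrow> ennreal"
  assumes h_eq_0: "\<And>x. \<not> 0 < G x \<Longrightarrow> h x = 0"
    and m: "0 < G (\<omega> !! m)" "succ_count G m \<omega> = N"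
  shows "(\<Sum>n\<in>{1..N}. h (apf_particle G \<omega> n)) = (\<Sum>i<m. h (\<omega> !! i))"
proof -
  have "(\<Sum>n\<in>{1..N}. h (apf_particle G \<omega> n)) = (\<Sum>k<N. h (\<omega> !! apf_time G \<omega> k))"
    unfolding apf_particle_def
    by (rule sum.reindex_bij_witness[where i=Suc and j="\<lambda>n. n - 1"]) auto
  also have "\<dots> = (\<Sum>i\<in>{i. i < m \<and> 0 < G (\<omega> !! i)}. h (\<omega> !! i))"
  proof (rule sum.reindex_bij_witness[where i="\<lambda>i. succ_count G i \<omega>" and j="apf_time G \<omega>"])
    fix k
    assume "k \<in> {..<N}"
    then obtain i where i: "i < m" "0 < G (\<omega> !! i)" "succ_count G i \<omega> = k"
      using succ_count_reaches[of k G m \<omega>] m by auto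
    then have "apf_time G \<omega> k = i"
      using apf_time_eqI[of G \<omega> i k] by blast
    with i show "succ_count G (apf_time G \<omega> k) \<omega> = k"
      and "apf_time G \<omega> k \<in> {i. i < m \<and> 0 < G (\<omega> !! i)}"
      by auto
  next
    fix i
    assume "i \<in> {i. i < m \<and> 0 < G (\<omega> !! i)}"
    then show "apf_time G \<omega> (succ_count G i \<omega>) = i" "succ_count G i \<omega> \<in> {..<N}"
      using apf_time_eqI succ_count_strict_mono m by auto
  qed simp
  also have "\<dots> = (\<Sum>i<m. h (\<omega> !! i))"
    by (rule sum.mono_neutral_left) (auto simp: h_eq_0)
  finally show ?thesis .
qed

text \<open>Both k and m count from 0, so trial m is success number k iff apf_time G \<omega> k = m.\<close>

definition kth_succ_ind :: "('a \<Rightarrow> real) \<Rightarrow> nat \<Rightarrow> nat \<Rightarrow> 'a stream \<Rightarrow> ennreal" where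
  "kth_succ_ind G k m \<omega> = (if 0 < G (\<omega> !! m) \<and> succ_count G m \<omega> = k then 1 else 0)"

lemma kth_succ_ind_0_Cons: "kth_succ_ind G k 0 (x ## \<omega>) = (if 0 < G x \<and> k = 0 then 1 else 0)"
  by (simp add: kth_succ_ind_def)

lemma kth_succ_ind_Suc_Cons:
  "kth_succ_ind G k (Suc m) (x ## \<omega>) =
    (if 0 < G x then (if k = 0 then 0 else kth_succ_ind G (k - 1) m \<omega>) else kth_succ_ind G k m \<omega>)"
  by (cases k) (auto simp: kth_succ_ind_def succ_count_Suc_Cons)

lemma measurable_succ_count_eq [measurable]:
  assumes [measurable]: "G \<in> borel_measurable M"
  shows "Measurable.pred (stream_space M) (\<lambda>\<omega>. succ_count G m \<omega> = k)"
proof (induction m arbitrary: k)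
  case (Suc m)
  note Suc.IH [measurable]
  have eq: "(\<lambda>\<omega>. succ_count G (Suc m) \<omega> = k) = (\<lambda>\<omega>.
      (\<not> 0 < G (\<omega> !! m) \<and> succ_count G m \<omega> = k) \<or>
      (0 < G (\<omega> !! m) \<and> k \<noteq> 0 \<and> succ_count G m \<omega> = k - 1))"
    by (auto simp: succ_count_Suc)
  show ?case
    unfolding eq by measurable
qed simp

lemma borel_measurable_kth_succ_ind [measurable]:
  assumes [measurable]: "G \<in> borel_measurable M"
  shows "kth_succ_ind G k m \<in> borel_measurable (stream_space M)"
  unfolding kth_succ_ind_def by measurable

lemma suminf_kth_succ_ind_mult:
  assumes "0 < G (\<omega> !! m)" "succ_count G m \<omega> = k"
  shows "(\<Sum>m'. kth_succ_ind G k m' \<omega> * c m') = c m"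
proof -
  have "kth_succ_ind G k m' \<omega> = (if m' = m then 1 else 0)" for m'
  proof (cases "0 < G (\<omega> !! m') \<and> succ_count G m' \<omega> = k")
    case True
    then have "m' = m"
      using apf_time_eqI assms by metis
    with True show ?thesis
      by (simp add: kth_succ_ind_def)
  next
    case False
    with assms show ?thesis
      by (auto simp: kth_succ_ind_def)
  qed
  then have "(\<Sum>m'. kth_succ_ind G k m' \<omega> * c m') = (\<Sum>m'. if m' = m then c m else 0)"
    by (intro suminf_cong) simp
  also have "\<dots> = c m"
    using sums_single[of m "\<lambda>_. c m"] sums_unique by fastforce
  finally show ?thesis .
qed

lemma suminf_kth_succ_ind_le_1: "(\<Sum>m. kth_succ_ind G k m \<omega>) \<le> 1"
proof (cases "\<exists>m. 0 < G (\<omega> !! m) \<and> succ_count G m \<omega> = k")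
  case True
  then show ?thesis
    using suminf_kth_succ_ind_mult[where c="\<lambda>_. 1"] by fastforce
next
  case False
  then have "kth_succ_ind G k m \<omega> = 0" for m
    by (auto simp: kth_succ_ind_def)
  then show ?thesis
    by simp
qed

section \<open>Expectation of the estimator for i.i.d. draws\<close>

lemma ennreal_fixpoint_eq_1:
  fixes a p q :: ennreal
  assumes "a \<le> 1" "p + q = 1" "0 < p" "a = p + q * a"
  shows "a = 1"
proof -
  have "a \<noteq> top" "p \<noteq> top" "q \<noteq> top"
    using assms(1,2) by (auto simp: top_unique)
  then obtain x y z where xyz: "a = ennreal x" "p = ennreal y" "q = ennreal z" "0 \<le> x" "0 \<le> y" "0 \<le> z"
    by (metis ennreal_cases)
  with assms have "x = y + z * x" "y + z = 1" "0 < y"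
    by (auto simp: ennreal_mult'[symmetric] ennreal_plus[symmetric] simp del: ennreal_plus)
  then have "y * x = y"
    by (simp add: left_diff_distrib eq_diff_eq[symmetric])
  with \<open>0 < y\<close> xyz(1) show ?thesis
    by simp
qed

definition apf_estimate :: "('a \<Rightarrow> real) \<Rightarrow> nat \<Rightarrow> ('a \<Rightarrow> ennreal) \<Rightarrow> 'a stream \<Rightarrow> ennreal" where
  "apf_estimate G N h \<omega> =
    (if apf_done G N \<omega> then (\<Sum>n\<in>{1..N}. h (apf_particle G \<omega> n)) / of_nat (apf_P G N \<omega> - 1) else 0)"

lemma apf_estimate_eq_suminf:
  fixes h :: "'a \<Rightarrow> ennreal"
  assumes h_eq_0: "\<And>x. \<not> 0 < G x \<Longrightarrow> h x = 0"
  shows "apf_estimate G N h \<omega> = (\<Sum>m. kth_succ_ind G N m \<omega> * (\<Sum>i<m. h (\<omega> !! i)) / of_nat m)"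
proof (cases "apf_done G N \<omega>")
  case True
  then obtain m where m: "0 < G (\<omega> !! m)" "succ_count G m \<omega> = N"
    using apf_done_iff by blast
  then have "apf_P G N \<omega> - 1 = m"
    using apf_time_eqI by (simp add: apf_P_def)
  with True m show ?thesis
    using suminf_kth_succ_ind_mult[OF m, of "\<lambda>m. (\<Sum>i<m. h (\<omega> !! i)) / of_nat m"]
      sum_apf_particle[of G h, OF h_eq_0 m]
    by (simp add: apf_estimate_def ennreal_times_divide)
next
  case False
  then have "kth_succ_ind G N m \<omega> = 0" for m
    using apf_done_iff by (auto simp: kth_succ_ind_def)
  with False show ?thesis
    by (simp add: apf_estimate_def)
qed

locale iid_trials = prob_space Q for Q :: "'a measure" +
  fixes G :: "'a \<Rightarrow> real" and h :: "'a \<Rightarrow> ennreal"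
  assumes G_measurable [measurable]: "G \<in> borel_measurable Q"
    and h_measurable [measurable]: "h \<in> borel_measurable Q"
    and h_eq_0: "\<And>x. \<not> 0 < G x \<Longrightarrow> h x = 0"
begin

definition "p_succ = (\<integral>\<^sup>+x. (if 0 < G x then 1 else 0) \<partial>Q)"

definition "p_fail = (\<integral>\<^sup>+x. (if 0 < G x then 0 else 1) \<partial>Q)"

definition "prob_kth_succ k m = (\<integral>\<^sup>+\<omega>. kth_succ_ind G k m \<omega> \<partial>stream_space Q)"

definition "kth_succ_moment k m i = (\<integral>\<^sup>+\<omega>. kth_succ_ind G k m \<omega> * h (\<omega> !! i) \<partial>stream_space Q)"

lemma p_succ_add_p_fail: "p_succ + p_fail = 1"
proof -
  have "p_succ + p_fail = (\<integral>\<^sup>+x. (if 0 < G x then 1 else 0) + (if 0 < G x then 0 else 1) \<partial>Q)"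
    unfolding p_succ_def p_fail_def by (subst nn_integral_add) auto
  also have "\<dots> = (\<integral>\<^sup>+x. 1 \<partial>Q)"
    by (intro nn_integral_cong) auto
  finally show ?thesis
    by (simp add: emeasure_space_1)
qed

lemma nn_integral_if_succ: "(\<integral>\<^sup>+x. (if 0 < G x then a else b) \<partial>Q) = a * p_succ + b * p_fail"
proof -
  have "(\<integral>\<^sup>+x. (if 0 < G x then a else b) \<partial>Q) =
      (\<integral>\<^sup>+x. a * (if 0 < G x then 1 else 0) + b * (if 0 < G x then 0 else 1) \<partial>Q)"
    by (intro nn_integral_cong) auto
  also have "\<dots> = a * p_succ + b * p_fail"
    unfolding p_succ_def p_fail_def by (subst nn_integral_add) (auto simp: nn_integral_cmult)
  finally show ?thesis .
qed

lemma prob_kth_succ_0: "prob_kth_succ k 0 = (if k = 0 then p_succ else 0)"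
proof -
  have "prob_kth_succ k 0 = (\<integral>\<^sup>+x. (\<integral>\<^sup>+\<omega>. kth_succ_ind G k 0 (x ## \<omega>) \<partial>stream_space Q) \<partial>Q)"
    unfolding prob_kth_succ_def by (rule nn_integral_stream_space) measurable
  also have "\<dots> = (\<integral>\<^sup>+x. (if 0 < G x then (if k = 0 then 1 else 0) else 0) \<partial>Q)"
    by (intro nn_integral_cong)
      (auto simp: kth_succ_ind_0_Cons prob_space.emeasure_space_1[OF prob_space_stream_space])
  finally show ?thesis
    by (simp add: nn_integral_if_succ)
qed

lemma prob_kth_succ_Suc:
  "prob_kth_succ k (Suc m) = (if k = 0 then 0 else prob_kth_succ (k - 1) m) * p_succ + prob_kth_succ k m * p_fail"
proof -
  have "prob_kth_succ k (Suc m) = (\<integral>\<^sup>+x. (\<integral>\<^sup>+\<omega>. kth_succ_ind G k (Suc m) (x ## \<omega>) \<partial>stream_space Q) \<partial>Q)"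
    unfolding prob_kth_succ_def by (rule nn_integral_stream_space) measurable
  also have "\<dots> = (\<integral>\<^sup>+x. (if 0 < G x then (if k = 0 then 0 else prob_kth_succ (k - 1) m) else prob_kth_succ k m) \<partial>Q)"
    by (intro nn_integral_cong) (auto simp: kth_succ_ind_Suc_Cons prob_kth_succ_def)
  finally show ?thesis
    by (simp add: nn_integral_if_succ)
qed

lemma kth_succ_moment_Suc_0:
  "kth_succ_moment k (Suc m) 0 = (if k = 0 then 0 else prob_kth_succ (k - 1) m) * (\<integral>\<^sup>+x. h x \<partial>Q)"
proof -
  have "kth_succ_ind G k (Suc m) (x ## \<omega>) * h x =
      (if k = 0 then 0 else kth_succ_ind G (k - 1) m \<omega>) * h x" for x \<omega>
    by (cases "0 < G x") (simp_all add: kth_succ_ind_Suc_Cons h_eq_0)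
  moreover have "kth_succ_moment k (Suc m) 0 =
      (\<integral>\<^sup>+x. (\<integral>\<^sup>+\<omega>. kth_succ_ind G k (Suc m) (x ## \<omega>) * h ((x ## \<omega>) !! 0) \<partial>stream_space Q) \<partial>Q)"
    unfolding kth_succ_moment_def by (rule nn_integral_stream_space) measurable
  ultimately have "kth_succ_moment k (Suc m) 0 =
      (\<integral>\<^sup>+x. (if k = 0 then 0 else prob_kth_succ (k - 1) m) * h x \<partial>Q)"
    by (simp add: prob_kth_succ_def nn_integral_multc)
  then show ?thesis
    by (simp add: nn_integral_cmult)
qed

lemma kth_succ_moment_Suc_Suc:
  "kth_succ_moment k (Suc m) (Suc i) =
    (if k = 0 then 0 else kth_succ_moment (k - 1) m i) * p_succ + kth_succ_moment k m i * p_fail"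
proof -
  have "kth_succ_moment k (Suc m) (Suc i) =
      (\<integral>\<^sup>+x. (\<integral>\<^sup>+\<omega>. kth_succ_ind G k (Suc m) (x ## \<omega>) * h ((x ## \<omega>) !! Suc i) \<partial>stream_space Q) \<partial>Q)"
    unfolding kth_succ_moment_def by (rule nn_integral_stream_space) measurable
  also have "\<dots> = (\<integral>\<^sup>+x. (if 0 < G x then (if k = 0 then 0 else kth_succ_moment (k - 1) m i)
      else kth_succ_moment k m i) \<partial>Q)"
    by (intro nn_integral_cong) (auto simp: kth_succ_ind_Suc_Cons kth_succ_moment_def)
  finally show ?thesis
    by (simp add: nn_integral_if_succ)
qed

text \<open>Exchangeability: moving the live draw i, which carries h, to the front leaves the other
  draws i.i.d., and draw m + 1 is success number k iff among them the one at position m is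
  success number k - 1.\<close>

lemma kth_succ_moment_Suc:
  "i \<le> m \<Longrightarrow> kth_succ_moment k (Suc m) i = (if k = 0 then 0 else prob_kth_succ (k - 1) m) * (\<integral>\<^sup>+x. h x \<partial>Q)"
proof (induction m arbitrary: i k)
  case 0
  then show ?case
    by (simp add: kth_succ_moment_Suc_0)
next
  case (Suc m)
  show ?case
  proof (cases i)
    case 0
    then show ?thesis
      by (simp add: kth_succ_moment_Suc_0)
  next
    case (Suc i')
    with Suc.prems have "i' \<le> m"
      by simp
    with Suc.IH[of i'] \<open>i = Suc i'\<close> show ?thesis
      by (cases k) (simp_all add: kth_succ_moment_Suc_Suc prob_kth_succ_Suc algebra_simps)
  qed
qed

lemma suminf_prob_kth_succ_le_1: "(\<Sum>m. prob_kth_succ k m) \<le> 1"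
proof -
  have "(\<Sum>m. prob_kth_succ k m) = (\<integral>\<^sup>+\<omega>. (\<Sum>m. kth_succ_ind G k m \<omega>) \<partial>stream_space Q)"
    unfolding prob_kth_succ_def by (rule nn_integral_suminf[symmetric]) measurable
  also have "\<dots> \<le> (\<integral>\<^sup>+\<omega>. 1 \<partial>stream_space Q)"
    by (intro nn_integral_mono suminf_kth_succ_ind_le_1)
  finally show ?thesis
    by (simp add: prob_space.emeasure_space_1[OF prob_space_stream_space])
qed

lemma suminf_prob_kth_succ_eq_1:
  assumes "0 < p_succ"
  shows "(\<Sum>m. prob_kth_succ k m) = 1"
proof (induction k)
  case 0
  have "(\<Sum>m. prob_kth_succ 0 m) = (\<Sum>m. prob_kth_succ 0 (Suc m)) + prob_kth_succ 0 0"
    using suminf_offset[of "prob_kth_succ 0" 1] by simp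
  also have "\<dots> = p_succ + p_fail * (\<Sum>m. prob_kth_succ 0 m)"
    by (simp add: prob_kth_succ_Suc prob_kth_succ_0 mult.commute)
  finally show ?case
    using ennreal_fixpoint_eq_1[OF suminf_prob_kth_succ_le_1 p_succ_add_p_fail assms] by simp
next
  case (Suc k)
  have "(\<Sum>m. prob_kth_succ (Suc k) m) = (\<Sum>m. prob_kth_succ (Suc k) (Suc m)) + prob_kth_succ (Suc k) 0"
    using suminf_offset[of "prob_kth_succ (Suc k)" 1] by simp
  also have "\<dots> = (\<Sum>m. prob_kth_succ k m * p_succ + prob_kth_succ (Suc k) m * p_fail)"
    by (simp add: prob_kth_succ_Suc prob_kth_succ_0)
  also have "\<dots> = p_succ + p_fail * (\<Sum>m. prob_kth_succ (Suc k) m)"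
    using Suc.IH by (simp add: suminf_add[symmetric] mult.commute)
  finally show ?case
    using ennreal_fixpoint_eq_1[OF suminf_prob_kth_succ_le_1 p_succ_add_p_fail assms] by simp
qed

lemma nn_integral_h_eq_0_if_p_succ_eq_0:
  assumes "p_succ = 0"
  shows "(\<integral>\<^sup>+x. h x \<partial>Q) = 0"
proof -
  have "AE x in Q. \<not> 0 < G x"
    using assms unfolding p_succ_def by (subst (asm) nn_integral_0_iff_AE) auto
  then have "AE x in Q. h x = 0"
    by eventually_elim (simp add: h_eq_0)
  then show ?thesis
    by (simp add: nn_integral_0_iff_AE)
qed

lemma suminf_prob_kth_succ_mult: "(\<Sum>m. prob_kth_succ k m) * (\<integral>\<^sup>+x. h x \<partial>Q) = (\<integral>\<^sup>+x. h x \<partial>Q)"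
  using suminf_prob_kth_succ_eq_1 nn_integral_h_eq_0_if_p_succ_eq_0
  by (cases "p_succ = 0") (simp_all add: zero_less_iff_neq_zero)

lemma nn_integral_kth_succ_ind_sum:
  "(\<integral>\<^sup>+\<omega>. kth_succ_ind G k m \<omega> * (\<Sum>i<m. h (\<omega> !! i)) / of_nat m \<partial>stream_space Q) =
    (\<Sum>i<m. kth_succ_moment k m i) / of_nat m"
proof -
  have "(\<integral>\<^sup>+\<omega>. kth_succ_ind G k m \<omega> * (\<Sum>i<m. h (\<omega> !! i)) \<partial>stream_space Q) =
      (\<Sum>i<m. kth_succ_moment k m i)"
    unfolding kth_succ_moment_def sum_distrib_left by (rule nn_integral_sum) measurable
  then show ?thesis
    by (subst nn_integral_divide) measurable
qed

theorem nn_integral_apf_estimate: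
  assumes "0 < N"
  shows "(\<integral>\<^sup>+\<omega>. apf_estimate G N h \<omega> \<partial>stream_space Q) = (\<integral>\<^sup>+x. h x \<partial>Q)"
proof -
  let ?H = "\<integral>\<^sup>+x. h x \<partial>Q"
  have moment_sum: "(\<Sum>i<Suc m. kth_succ_moment N (Suc m) i) / of_nat (Suc m) = prob_kth_succ (N - 1) m * ?H" for m
  proof -
    have "kth_succ_moment N (Suc m) i = prob_kth_succ (N - 1) m * ?H" if "i < Suc m" for i
      using assms that by (simp add: kth_succ_moment_Suc)
    then have "(\<Sum>i<Suc m. kth_succ_moment N (Suc m) i) = (prob_kth_succ (N - 1) m * ?H) * of_nat (Suc m)"
      by (simp add: mult.commute)
    then show ?thesis
      by (simp add: ennreal_of_nat_neq_top ennreal_mult_divide_eq del: of_nat_Suc)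
  qed
  have "(\<integral>\<^sup>+\<omega>. apf_estimate G N h \<omega> \<partial>stream_space Q) =
      (\<integral>\<^sup>+\<omega>. (\<Sum>m. kth_succ_ind G N m \<omega> * (\<Sum>i<m. h (\<omega> !! i)) / of_nat m) \<partial>stream_space Q)"
    using apf_estimate_eq_suminf[of G h, OF h_eq_0] by simp
  also have "\<dots> = (\<Sum>m. \<integral>\<^sup>+\<omega>. kth_succ_ind G N m \<omega> * (\<Sum>i<m. h (\<omega> !! i)) / of_nat m \<partial>stream_space Q)"
    by (rule nn_integral_suminf) measurable
  also have "\<dots> = (\<Sum>m. (\<Sum>i<m. kth_succ_moment N m i) / of_nat m)"
    by (simp add: nn_integral_kth_succ_ind_sum)
  also have "\<dots> = (\<Sum>m. (\<Sum>i<Suc m. kth_succ_moment N (Suc m) i) / of_nat (Suc m))"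
    using suminf_offset[of "\<lambda>m. (\<Sum>i<m. kth_succ_moment N m i) / of_nat m" 1] by simp
  also have "\<dots> = (\<Sum>m. prob_kth_succ (N - 1) m) * ?H"
    unfolding moment_sum by (rule ennreal_suminf_multc)
  finally show ?thesis
    by (simp add: suminf_prob_kth_succ_mult)
qed

end

section \<open>One step of the alive particle filter\<close>

lemma normalized_weights_in_prob_algebra:
  fixes w :: "'i \<Rightarrow> real"
  assumes "finite I" "\<And>n. n \<in> I \<Longrightarrow> 0 \<le> w n" "0 < (\<Sum>m\<in>I. w m)"
  shows "density (count_space I) (\<lambda>a. ennreal (w a / (\<Sum>m\<in>I. w m))) \<in> space (prob_algebra (count_space I))"
proof -
  let ?D = "density (count_space I) (\<lambda>a. ennreal (w a / (\<Sum>m\<in>I. w m)))"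
  have "emeasure ?D (space ?D) = (\<Sum>a\<in>I. ennreal (w a / (\<Sum>m\<in>I. w m)))"
    using assms(1) by (simp add: emeasure_density nn_integral_count_space_finite)
  also have "\<dots> = ennreal (\<Sum>a\<in>I. w a / (\<Sum>m\<in>I. w m))"
    using assms(2,3) by (subst sum_ennreal) auto
  also have "\<dots> = 1"
    using assms(3) by (simp add: sum_divide_distrib[symmetric])
  finally have "prob_space ?D"
    by (rule prob_spaceI)
  then show ?thesis
    by (simp add: space_prob_algebra)
qed

context
  fixes M :: "'a measure" and ft :: "'a \<Rightarrow> 'a measure"
    and N :: nat and xs :: "nat \<Rightarrow> 'a" and w :: "nat \<Rightarrow> real"
  assumes ft: "ft \<in> M \<rightarrow>\<^sub>M prob_algebra M"
    and xs: "\<And>n. n \<in> {1..N} \<Longrightarrow> xs n \<in> space M"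
    and w_nonneg: "\<And>n. n \<in> {1..N} \<Longrightarrow> 0 \<le> w n"
    and w_pos: "0 < (\<Sum>m\<in>{1..N}. w m)"
begin

private lemma ancestor_kernel: "(\<lambda>a. ft (xs a)) \<in> count_space {1..N} \<rightarrow>\<^sub>M prob_algebra M"
  using measurable_space[OF ft xs] by simp

lemma apf_trial_in_prob_algebra: "apf_trial N w xs ft \<in> space (prob_algebra M)"
  using prob_space_bind'[OF normalized_weights_in_prob_algebra ancestor_kernel]
    sets_bind'[OF normalized_weights_in_prob_algebra ancestor_kernel] w_nonneg w_pos
  by (simp add: apf_trial_def space_prob_algebra)

lemma nn_integral_apf_trial:
  assumes "h \<in> borel_measurable M"
  shows "(\<integral>\<^sup>+x. h x \<partial>apf_trial N w xs ft) =
    (\<Sum>n\<in>{1..N}. ennreal (w n / (\<Sum>m\<in>{1..N}. w m)) * (\<integral>\<^sup>+x. h x \<partial>ft (xs n)))"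
  unfolding apf_trial_def
  using measurable_prob_algebraD[OF ancestor_kernel]
  by (subst nn_integral_bind[OF assms])
    (simp_all add: nn_integral_density nn_integral_count_space_finite cong: measurable_cong_sets)

end

lemma borel_measurable_lik_aux:
  assumes kernel: "\<And>s. s \<in> {1..T} \<Longrightarrow> f s \<in> M \<rightarrow>\<^sub>M prob_algebra M"
    and g_meas: "\<And>s. s \<in> {1..T} \<Longrightarrow> g s \<in> borel_measurable M"
  shows "1 \<le> s \<Longrightarrow> s + k \<le> Suc T \<Longrightarrow> lik_aux f g s k \<in> borel_measurable M"
proof (induction k arbitrary: s)
  case 0
  have "lik_aux f g s 0 = (\<lambda>_. 1)"
    by (simp add: fun_eq_iff)
  then show ?case
    by simp
next
  case (Suc k)
  then have s: "s \<in> {1..T}"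
    by simp
  have "lik_aux f g (Suc s) k \<in> borel_measurable M"
    using Suc by simp
  then have "(\<lambda>y. ennreal (g s y) * lik_aux f g (Suc s) k y) \<in> borel_measurable M"
    using g_meas[OF s] by measurable
  then have "(\<lambda>x. \<integral>\<^sup>+y. ennreal (g s y) * lik_aux f g (Suc s) k y \<partial>f s x) \<in> borel_measurable M"
    by (rule measurable_compose[OF measurable_prob_algebraD[OF kernel[OF s]]
      nn_integral_measurable_subprob_algebra])
  then show ?case
    by simp
qed

lemma borel_measurable_cond_lik:
  assumes "\<And>s. s \<in> {1..T} \<Longrightarrow> f s \<in> M \<rightarrow>\<^sub>M prob_algebra M"
    and "\<And>s. s \<in> {1..T} \<Longrightarrow> g s \<in> borel_measurable M"
    and "1 \<le> s" "s \<le> Suc t'" "t' \<le> T"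
  shows "cond_lik f g s t' \<in> borel_measurable M"
proof -
  have "cond_lik f g s t' = lik_aux f g s (Suc t' - s)"
    by (simp add: fun_eq_iff cond_lik_def)
  with assms show ?thesis
    using borel_measurable_lik_aux[of T f M g s "Suc t' - s"] by simp
qed

lemma cond_lik_unfold:
  "t \<le> t' \<Longrightarrow> cond_lik f g t t' x = (\<integral>\<^sup>+y. ennreal (g t y) * cond_lik f g (Suc t) t' y \<partial>f t x)"
  by (simp add: cond_lik_def Suc_diff_le)

theorem lemma2:
  fixes M :: "'a measure"
    and f :: "nat \<Rightarrow> 'a \<Rightarrow> 'a measure"
    and g :: "nat \<Rightarrow> 'a \<Rightarrow> real"
    and T N t t' :: nat
    and xs :: "nat \<Rightarrow> 'a" and w :: "nat \<Rightarrow> real"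
  assumes kernel: "\<And>s. s \<in> {1..T} \<Longrightarrow> f s \<in> M \<rightarrow>\<^sub>M prob_algebra M"
    and g_meas: "\<And>s. s \<in> {1..T} \<Longrightarrow> g s \<in> borel_measurable M"
    and g_nonneg: "\<And>s x. s \<in> {1..T} \<Longrightarrow> x \<in> space M \<Longrightarrow> 0 \<le> g s x"
    and N: "1 \<le> N"
    and t: "1 \<le> t" "t \<le> t'" "t' \<le> T"
    and xs: "\<And>n. n \<in> {1..N} \<Longrightarrow> xs n \<in> space M"
    and w_nonneg: "\<And>n. n \<in> {1..N} \<Longrightarrow> 0 \<le> w n"
    and w_pos: "0 < (\<Sum>m\<in>{1..N}. w m)"
  shows "(\<integral>\<^sup>+ \<omega>. (if apf_done (g t) N \<omega> then
            (\<Sum>n\<in>{1..N}. ennreal (g t (apf_particle (g t) \<omega> n))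
                 * cond_lik f g (Suc t) t' (apf_particle (g t) \<omega> n))
            / of_nat (apf_P (g t) N \<omega> - 1)
          else 0)
        \<partial>(stream_space (apf_trial N w xs (f t))))
       = (\<Sum>n\<in>{1..N}. ennreal (w n / (\<Sum>m\<in>{1..N}. w m)) * cond_lik f g t t' (xs n))"
proof -
  let ?Q = "apf_trial N w xs (f t)"
  define h where "h = (\<lambda>x. ennreal (g t x) * cond_lik f g (Suc t) t' x)"
  from t have t_range: "t \<in> {1..T}"
    by simp
  have [measurable]: "g t \<in> borel_measurable M" "cond_lik f g (Suc t) t' \<in> borel_measurable M"
    using g_meas[OF t_range] borel_measurable_cond_lik[OF kernel g_meas] t by simp_all
  have h_meas: "h \<in> borel_measurable M"
    unfolding h_def by measurable
  have "?Q \<in> space (prob_algebra M)"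
    by (rule apf_trial_in_prob_algebra[OF kernel[OF t_range] xs w_nonneg w_pos])
  then have "prob_space ?Q" and sets_Q: "sets ?Q = sets M"
    by (simp_all add: space_prob_algebra)
  then interpret iid_trials ?Q "g t" h
    by (intro iid_trials.intro iid_trials_axioms.intro)
      (simp_all add: measurable_cong_sets[OF sets_Q refl] h_meas h_def ennreal_neg)
  have "(\<integral>\<^sup>+x. h x \<partial>?Q) = (\<Sum>n\<in>{1..N}. ennreal (w n / (\<Sum>m\<in>{1..N}. w m)) * (\<integral>\<^sup>+x. h x \<partial>f t (xs n)))"
    by (rule nn_integral_apf_trial[OF kernel[OF t_range] xs w_nonneg w_pos h_meas])
  also have "\<dots> = (\<Sum>n\<in>{1..N}. ennreal (w n / (\<Sum>m\<in>{1..N}. w m)) * cond_lik f g t t' (xs n))"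
    using t by (simp add: h_def cond_lik_unfold)
  finally show ?thesis
    using nn_integral_apf_estimate[of N] N by (simp add: apf_estimate_def h_def)
qed

end
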